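(* Assume H1 and H2. Then for any $\kappa>0$, $\theta\in\Theta$, $\bar\gamma<2/(\mathtt{m}+L)$, $\gamma\in(0,\bar\gamma]$ and $x\in\mathbb{R}^d$, $$\|\mathrm{prox}^{\gamma\kappa}_{U_\theta}(x)-\gamma\nabla V_\theta(\mathrm{prox}^{\gamma\kappa}_{U_\theta}(x))\|^2\le(1-\gamma\varpi/2)\|x\|^2+\gamma\big[\bar\gamma\kappa^2M^2+\{(2/(\mathtt{m}+L)-\bar\gamma)^{-1}+4\varpi\}R_{V,1}^2+2\kappa^2M^2\varpi^{-1}\big],$$ with $\varpi=\mathtt{m}L/(\mathtt{m}+L)$.
   Context: $\|\cdot\|$ Euclidean, $\Theta\subset\mathbb{R}^{d_\Theta}$ nonempty. $\mathrm{prox}^\lambda_U(x)=\arg\min_{\tilde x}\{U(\tilde x)+\|x-\tilde x\|^2/(2\lambda)\}$. $\mathtt{m}$-convex: $V(tx+(1-t)y)\le tV(x)+(1-t)V(y)-(\mathtt{m}/2)t(1-t)\|x-y\|^2$. H1: for every $\theta\in\Theta$ convex $V_\theta,\bar V_\theta,U_\theta,\bar U_\theta:\mathbb{R}^d\to[0,\infty)$ with (a) $e^{-V_\theta-U_\theta}$, $e^{-\bar V_\theta-\bar U_\theta}$ integrable with $\min(\inf_\theta\int e^{-V_\theta-U_\theta},\inf_\theta\int e^{-\bar V_\theta-\bar U_\theta})>0$; (b) $V_\theta,\bar V_\theta$ $C^1$ with $L$-Lipschitz gradients ($L$ independent of $\theta$), and for each $\theta$ minimizers $x^*_\theta$ of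 $V_\theta$, $\bar x^*_\theta$ of $\bar V_\theta$ with norm $\le R_{V,1}$ and minimum values of absolute value $\le R_{V,2}$; (c) $U_\theta,\bar U_\theta$ are $M$-Lipschitz, with points of norm $\le R_{U,1}$ where $|U_\theta|,|\bar U_\theta|\le R_{U,2}$. H2: there is $\mathtt{m}>0$ such that $V_\theta,\bar V_\theta$ are $\mathtt{m}$-convex for all $\theta$. *)

theory Defs
  imports "HOL-Analysis.Analysis"
begin

definition prox :: "real \<Rightarrow> ('a::euclidean_space \<Rightarrow> real) \<Rightarrow> 'a \<Rightarrow> 'a" where
  "prox lam U x = (THE y. \<forall>z. U y + (norm (x - y))\<^sup>2 / (2 * lam) \<le> U z + (norm (x - z))\<^sup>2 / (2 * lam))"

definition m_convex :: "real \<Rightarrow> ('a::euclidean_space \<Rightarrow> real) \<Rightarrow> bool" where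
  "m_convex m V \<longleftrightarrow> (\<forall>x y t. 0 \<le> t \<longrightarrow> t \<le> 1 \<longrightarrow>
     V (t *\<^sub>R x + (1 - t) *\<^sub>R y) \<le> t * V x + (1 - t) * V y - (m / 2) * t * (1 - t) * (norm (x - y))\<^sup>2)"

end

theory Submission
  imports Defs
begin

text \<open>Write V for V theta and x* for its minimiser, where grad V vanishes. Strong convexity
  together with the L-Lipschitz gradient gives Nesterov's inequality
  |grad V p|^2 + m L |p - x*|^2 \<le> (m + L) <grad V p, p - x*>. Expanding |p - gamma grad V p|^2
  with it shows that a gradient step of size gamma \<le> gamma_bar < 2/(m + L) contracts |p|^2 by
  the factor 1 - gamma varpi, up to an error gamma (1/(2/(m + L) - gamma_bar) + 2 varpi) R_V1^2.
  As U theta is M-Lipschitz, the proximal point p of x satisfies |x - p| \<le> gamma kappa M, and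
  Young's inequality absorbs this perturbation at the price of halving the contraction rate.
  Of the hypotheses only those on V theta (smoothness, m-convexity, a minimiser of norm at
  most R_V1) and on U theta (convexity, nonnegativity, M-Lipschitz continuity) are used.\<close>

section \<open>Smooth strongly convex functions\<close>

lemma has_real_derivative_along_line:
  fixes f :: "'a::real_inner \<Rightarrow> real"
  assumes "\<And>x. (f has_derivative (\<lambda>h. g x \<bullet> h)) (at x)"
  shows "((\<lambda>t. f (y + t *\<^sub>R d)) has_real_derivative (g (y + t *\<^sub>R d) \<bullet> d)) (at t)"
proof -
  have "((\<lambda>t. y + t *\<^sub>R d) has_derivative (\<lambda>s. s *\<^sub>R d)) (at t)"
    by (auto intro!: derivative_eq_intros)
  from has_derivative_compose[OF this assms]
  show ?thesis
    by (simp add: has_field_derivative_def mult.commute[of _ "g (y + t *\<^sub>R d) \<bullet> d"])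
qed

lemma lipschitz_gradient_upper_bound:
  fixes f :: "'a::real_inner \<Rightarrow> real"
  assumes der: "\<And>x. (f has_derivative (\<lambda>h. g x \<bullet> h)) (at x)"
    and lip: "\<And>x y. norm (g x - g y) \<le> L * norm (x - y)"
  shows "f z \<le> f y + g y \<bullet> (z - y) + L / 2 * (norm (z - y))\<^sup>2"
proof -
  define d where "d = z - y"
  define \<psi> where "\<psi> t = f (y + t *\<^sub>R d) - t * (g y \<bullet> d) - L / 2 * t\<^sup>2 * (norm d)\<^sup>2" for t
  have "(\<psi> has_real_derivative (g (y + t *\<^sub>R d) \<bullet> d - g y \<bullet> d - L * t * (norm d)\<^sup>2)) (at t)" for t
    unfolding \<psi>_def
    by (rule derivative_eq_intros has_real_derivative_along_line[OF der] refl | simp)+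
  then obtain \<xi> where \<xi>: "0 < \<xi>" "\<xi> < 1"
    and mvt: "\<psi> 1 - \<psi> 0 = g (y + \<xi> *\<^sub>R d) \<bullet> d - g y \<bullet> d - L * \<xi> * (norm d)\<^sup>2"
    using MVT2[of 0 1 \<psi> "\<lambda>t. g (y + t *\<^sub>R d) \<bullet> d - g y \<bullet> d - L * t * (norm d)\<^sup>2"] by auto
  have "g (y + \<xi> *\<^sub>R d) \<bullet> d - g y \<bullet> d \<le> norm (g (y + \<xi> *\<^sub>R d) - g y) * norm d"
    using norm_cauchy_schwarz by (metis inner_diff_left)
  also have "\<dots> \<le> L * \<xi> * (norm d)\<^sup>2"
    using mult_right_mono[OF lip[of "y + \<xi> *\<^sub>R d" y] norm_ge_zero] \<xi>
    by (simp add: power2_eq_square mult.assoc)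
  finally have "\<psi> 1 \<le> \<psi> 0"
    using mvt by simp
  then show ?thesis
    by (simp add: \<psi>_def d_def)
qed

lemma m_convex_gradient_lower_bound:
  fixes f :: "'a::euclidean_space \<Rightarrow> real"
  assumes der: "\<And>x. (f has_derivative (\<lambda>h. g x \<bullet> h)) (at x)"
    and mc: "m_convex m f"
  shows "f y + g y \<bullet> (z - y) + m / 2 * (norm (z - y))\<^sup>2 \<le> f z"
proof -
  define d where "d = z - y"
  define \<phi> where "\<phi> t = f (y + t *\<^sub>R d)" for t
  have "(\<phi> has_real_derivative (g y \<bullet> d)) (at 0 within {0<..})"
    using has_real_derivative_along_line[OF der, of y d 0] unfolding \<phi>_def
    by (simp add: has_field_derivative_at_within)
  then have slope: "((\<lambda>t. (\<phi> t - \<phi> 0) / t) \<longlongrightarrow> g y \<bullet> d) (at_right 0)"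
    by (simp add: has_field_derivative_iff)
  have bound: "((\<lambda>t. f z - f y - m / 2 * (1 - t) * (norm d)\<^sup>2)
                 \<longlongrightarrow> f z - f y - m / 2 * (1 - 0) * (norm d)\<^sup>2) (at_right 0)"
    by (intro tendsto_intros)
  have "eventually (\<lambda>t. t \<in> {0<..<1}) (at_right (0::real))"
    by (rule eventually_at_right_real) simp
  then have "eventually (\<lambda>t. (\<phi> t - \<phi> 0) / t \<le> f z - f y - m / 2 * (1 - t) * (norm d)\<^sup>2)
          (at_right 0)"
  proof eventually_elim
    case (elim t)
    have "f (t *\<^sub>R z + (1 - t) *\<^sub>R y) \<le> t * f z + (1 - t) * f y - m / 2 * t * (1 - t) * (norm (z - y))\<^sup>2"
      using mc elim unfolding m_convex_def by simp
    moreover have "t *\<^sub>R z + (1 - t) *\<^sub>R y = y + t *\<^sub>R d"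
      by (simp add: d_def algebra_simps)
    ultimately have "\<phi> t - \<phi> 0 \<le> t * (f z - f y - m / 2 * (1 - t) * (norm d)\<^sup>2)"
      by (simp add: \<phi>_def d_def algebra_simps)
    then show ?case
      using elim by (simp add: divide_le_eq mult.commute)
  qed
  then have "g y \<bullet> d \<le> f z - f y - m / 2 * (1 - 0) * (norm d)\<^sup>2"
    by (rule tendsto_le[OF _ bound slope, rotated]) simp
  then show ?thesis
    by (simp add: d_def)
qed

lemma gradient_eq_0_at_minimum:
  fixes f :: "'a::real_inner \<Rightarrow> real"
  assumes "(f has_derivative (\<lambda>h. g \<bullet> h)) (at x)" and "\<And>y. f x \<le> f y"
  shows "g = 0"
proof -
  have "(\<lambda>h. g \<bullet> h) = (\<lambda>h. 0)"
    using has_derivative_local_min[OF assms(1)] assms(2) by (simp add: always_eventually)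
  then show ?thesis
    by (metis inner_eq_zero_iff)
qed

lemma m_convex_le_lipschitz_gradient:
  fixes f :: "'a::euclidean_space \<Rightarrow> real"
  assumes der: "\<And>x. (f has_derivative (\<lambda>h. g x \<bullet> h)) (at x)"
    and lip: "\<And>x y. norm (g x - g y) \<le> L * norm (x - y)"
    and mc: "m_convex m f"
  shows "m \<le> L"
proof -
  obtain b :: 'a where "b \<in> Basis"
    using nonempty_Basis by blast
  then have "norm b = 1"
    by simp
  moreover have "f 0 + g 0 \<bullet> b + m / 2 * (norm b)\<^sup>2 \<le> f 0 + g 0 \<bullet> b + L / 2 * (norm b)\<^sup>2"
    using m_convex_gradient_lower_bound[OF der mc, of 0 b]
      lipschitz_gradient_upper_bound[OF der lip, of b 0] by simp
  ultimately show ?thesis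
    by simp
qed

lemma le_mult_of_forall_quadratic_le:
  fixes n a \<beta> :: real
  assumes all: "\<And>t. (2 * t - \<beta> * t\<^sup>2) * n \<le> a" and "0 \<le> n" and "0 \<le> \<beta>"
  shows "n \<le> \<beta> * a"
proof (cases "\<beta> = 0")
  case True
  have "n = 0"
  proof (rule ccontr)
    assume "n \<noteq> 0"
    with \<open>0 \<le> n\<close> have "0 < n" by simp
    have "(2 * ((\<bar>a\<bar> + 1) / n) - \<beta> * ((\<bar>a\<bar> + 1) / n)\<^sup>2) * n \<le> a"
      by (rule all)
    with True \<open>0 < n\<close> show False
      by simp
  qed
  with True show ?thesis
    by simp
next
  case False
  with \<open>0 \<le> \<beta>\<close> have "0 < \<beta>" by simp
  have "(2 * (1 / \<beta>) - \<beta> * (1 / \<beta>)\<^sup>2) * n \<le> a"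
    by (rule all)
  with \<open>0 < \<beta>\<close> show ?thesis
    by (simp add: power2_eq_square field_simps)
qed

text \<open>Comparing \<phi> at a with its value at b - t (G b - G a) gives a bound quadratic in t;
  optimising over t yields co-coercivity.\<close>
lemma cocoercive_of_tangent_bounds:
  fixes \<phi> :: "'a::real_inner \<Rightarrow> real" and G :: "'a \<Rightarrow> 'a"
  assumes lower: "\<And>y z. \<phi> y + G y \<bullet> (z - y) \<le> \<phi> z"
    and upper: "\<And>y z. \<phi> z \<le> \<phi> y + G y \<bullet> (z - y) + \<beta> / 2 * (norm (z - y))\<^sup>2"
    and "0 \<le> \<beta>"
  shows "(norm (G x - G y))\<^sup>2 \<le> \<beta> * ((G x - G y) \<bullet> (x - y))"
proof -
  have shifted: "\<phi> a - G a \<bullet> a \<le> \<phi> b - G a \<bullet> b - (t - \<beta> / 2 * t\<^sup>2) * (norm (G b - G a))\<^sup>2"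
    for a b t
  proof -
    define h where "h = G b - G a"
    define w where "w = b - t *\<^sub>R h"
    have "\<phi> a + G a \<bullet> (w - a) \<le> \<phi> w"
      by (rule lower)
    moreover have "\<phi> w \<le> \<phi> b + G b \<bullet> (w - b) + \<beta> / 2 * (norm (w - b))\<^sup>2"
      by (rule upper)
    moreover have "(norm (w - b))\<^sup>2 = t\<^sup>2 * (norm h)\<^sup>2"
      by (simp add: w_def power_mult_distrib)
    moreover have "G b \<bullet> h - G a \<bullet> h = (norm h)\<^sup>2"
      by (simp add: h_def power2_norm_eq_inner inner_diff_left)
    ultimately show ?thesis
      by (simp add: w_def h_def[symmetric] inner_diff_right algebra_simps)
  qed
  have "(2 * t - \<beta> * t\<^sup>2) * (norm (G x - G y))\<^sup>2 \<le> (G x - G y) \<bullet> (x - y)" for t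
    using shifted[of x y t] shifted[of y x t]
    by (simp add: norm_minus_commute inner_diff_left inner_diff_right algebra_simps)
  then show ?thesis
    using le_mult_of_forall_quadratic_le \<open>0 \<le> \<beta>\<close> by simp
qed

text \<open>Nesterov's inequality (Introductory Lectures on Convex Optimization, Thm. 2.1.12):
  co-coercivity of the gradient of f - m/2 |.|^2, which is (L - m)-Lipschitz.\<close>
lemma m_convex_lipschitz_gradient_inner_ge:
  fixes f :: "'a::euclidean_space \<Rightarrow> real"
  assumes der: "\<And>x. (f has_derivative (\<lambda>h. g x \<bullet> h)) (at x)"
    and lip: "\<And>x y. norm (g x - g y) \<le> L * norm (x - y)"
    and mc: "m_convex m f"
  shows "(norm (g x - g y))\<^sup>2 + m * L * (norm (x - y))\<^sup>2 \<le> (m + L) * ((g x - g y) \<bullet> (x - y))"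
proof -
  define \<phi> where "\<phi> z = f z - m / 2 * (norm z)\<^sup>2" for z
  define G where "G z = g z - m *\<^sub>R z" for z
  have sq: "(norm (z - y))\<^sup>2 = (norm z)\<^sup>2 - 2 * (y \<bullet> z) + (norm y)\<^sup>2" for y z :: 'a
    by (simp add: power2_norm_eq_inner inner_diff_left inner_diff_right inner_commute)
  have G_inner: "G y \<bullet> (z - y) = g y \<bullet> (z - y) - m * (y \<bullet> z) + m * (norm y)\<^sup>2" for y z
    by (simp add: G_def power2_norm_eq_inner inner_diff_left inner_diff_right)
  have "\<phi> y + G y \<bullet> (z - y) \<le> \<phi> z" for y z
    using m_convex_gradient_lower_bound[OF der mc, of y z] unfolding \<phi>_def G_inner
    by (simp add: sq algebra_simps)
  moreover have "\<phi> z \<le> \<phi> y + G y \<bullet> (z - y) + (L - m) / 2 * (norm (z - y))\<^sup>2" for y z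
    using lipschitz_gradient_upper_bound[OF der lip, of z y]
    by (simp add: \<phi>_def G_inner sq field_simps)
  moreover have "0 \<le> L - m"
    using m_convex_le_lipschitz_gradient[OF der lip mc] by simp
  ultimately have coco: "(norm (G x - G y))\<^sup>2 \<le> (L - m) * ((G x - G y) \<bullet> (x - y))"
    by (rule cocoercive_of_tangent_bounds)
  define h where "h = g x - g y"
  define d where "d = x - y"
  have "G x - G y = h - m *\<^sub>R d"
    by (simp add: G_def h_def d_def algebra_simps)
  moreover have "(norm (h - m *\<^sub>R d))\<^sup>2 = (norm h)\<^sup>2 - 2 * m * (h \<bullet> d) + m\<^sup>2 * (norm d)\<^sup>2"
    and "(h - m *\<^sub>R d) \<bullet> d = h \<bullet> d - m * (norm d)\<^sup>2"
    by (simp_all add: power2_norm_eq_inner inner_diff_left inner_diff_right inner_commute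
        algebra_simps power2_eq_square[of m])
  ultimately have "(norm h)\<^sup>2 - 2 * m * (h \<bullet> d) + m\<^sup>2 * (norm d)\<^sup>2 \<le> (L - m) * (h \<bullet> d - m * (norm d)\<^sup>2)"
    using coco by (simp add: d_def)
  then show ?thesis
    unfolding h_def[symmetric] d_def[symmetric] by (simp add: algebra_simps power2_eq_square[of m])
qed

section \<open>The proximal operator\<close>

definition prox_objective :: "real \<Rightarrow> ('a::real_normed_vector \<Rightarrow> real) \<Rightarrow> 'a \<Rightarrow> 'a \<Rightarrow> real" where
  "prox_objective lam U x z = U z + (norm (x - z))\<^sup>2 / (2 * lam)"

lemma prox_eq_The_minimiser:
  "prox lam U x = (THE p. \<forall>z. prox_objective lam U x p \<le> prox_objective lam U x z)"
  by (simp add: prox_def prox_objective_def)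

lemma norm_midpoint_diff_squared:
  fixes x p q :: "'a::real_inner"
  shows "(norm (x - ((1/2) *\<^sub>R p + (1/2) *\<^sub>R q)))\<^sup>2
           = ((norm (x - p))\<^sup>2 + (norm (x - q))\<^sup>2) / 2 - (norm (p - q))\<^sup>2 / 4"
  by (simp add: power2_norm_eq_inner inner_diff_left inner_diff_right inner_add_left
      inner_add_right inner_commute field_simps)

lemma prox_objective_midpoint_less:
  fixes U :: "'a::real_inner \<Rightarrow> real"
  assumes "convex_on UNIV U" and "0 < lam" and "p \<noteq> q"
  shows "prox_objective lam U x ((1/2) *\<^sub>R p + (1/2) *\<^sub>R q)
           < (prox_objective lam U x p + prox_objective lam U x q) / 2"
proof -
  have "U ((1/2) *\<^sub>R p + (1/2) *\<^sub>R q) \<le> (U p + U q) / 2"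
    using convex_onD[OF assms(1), of "1/2" p q] by simp
  moreover have "(norm (x - ((1/2) *\<^sub>R p + (1/2) *\<^sub>R q)))\<^sup>2 / (2 * lam)
      = ((norm (x - p))\<^sup>2 / (2 * lam) + (norm (x - q))\<^sup>2 / (2 * lam)) / 2 - (norm (p - q))\<^sup>2 / (8 * lam)"
    unfolding norm_midpoint_diff_squared using assms(2) by (simp add: field_simps)
  moreover have "0 < (norm (p - q))\<^sup>2 / (8 * lam)"
    using assms(2,3) by simp
  ultimately show ?thesis
    unfolding prox_objective_def by argo
qed

lemma prox_objective_has_minimiser:
  fixes U :: "'a::euclidean_space \<Rightarrow> real"
  assumes cont: "continuous_on UNIV U" and nonneg: "\<And>z. 0 \<le> U z" and "0 < lam"
  shows "\<exists>p. \<forall>z. prox_objective lam U x p \<le> prox_objective lam U x z"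
proof -
  define F where "F = prox_objective lam U x"
  define r where "r = sqrt (2 * lam * (U x + 1))"
  have "0 \<le> r"
    using \<open>0 < lam\<close> nonneg[of x] by (simp add: r_def)
  have "continuous_on (cball x r) F"
    unfolding F_def prox_objective_def using \<open>0 < lam\<close>
    by (intro continuous_intros continuous_on_subset[OF cont]) auto
  then obtain p where "p \<in> cball x r" and p_min: "\<And>z. z \<in> cball x r \<Longrightarrow> F p \<le> F z"
    using continuous_attains_inf[OF compact_cball] \<open>0 \<le> r\<close> by (metis cball_eq_empty not_less)
  have "F p \<le> F z" for z
  proof (cases "z \<in> cball x r")
    case False
    text \<open>Outside the ball the quadratic term alone exceeds F x = U x.\<close>
    then have "r\<^sup>2 < (norm (x - z))\<^sup>2"
      using \<open>0 \<le> r\<close> by (simp add: dist_norm power_strict_mono)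
    moreover have "r\<^sup>2 = 2 * lam * (U x + 1)"
      using \<open>0 < lam\<close> nonneg[of x] by (simp add: r_def)
    ultimately have "U x < (norm (x - z))\<^sup>2 / (2 * lam)"
      using \<open>0 < lam\<close> by (simp add: field_simps)
    moreover have "F p \<le> U x"
      using p_min[of x] \<open>0 \<le> r\<close> by (simp add: F_def prox_objective_def)
    ultimately show ?thesis
      using nonneg[of z] by (simp add: F_def prox_objective_def)
  qed (rule p_min)
  then show ?thesis
    by (auto simp: F_def)
qed

text \<open>Since prox is defined by THE, the uniqueness of the minimiser (from the strictly convex
  quadratic term) is what makes prox a minimiser at all.\<close>
lemma prox_minimises:
  fixes U :: "'a::euclidean_space \<Rightarrow> real"
  assumes "convex_on UNIV U" and "continuous_on UNIV U" and "\<And>z. 0 \<le> U z" and "0 < lam"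
  shows "prox_objective lam U x (prox lam U x) \<le> prox_objective lam U x z"
proof -
  define F where "F = prox_objective lam U x"
  have "\<exists>!p. \<forall>z. F p \<le> F z"
  proof (rule ex_ex1I)
    show "\<exists>p. \<forall>z. F p \<le> F z"
      unfolding F_def by (rule prox_objective_has_minimiser[OF assms(2-4)])
  next
    fix p q
    assume p: "\<forall>z. F p \<le> F z" and q: "\<forall>z. F q \<le> F z"
    show "p = q"
    proof (rule ccontr)
      assume "p \<noteq> q"
      then have "F ((1/2) *\<^sub>R p + (1/2) *\<^sub>R q) < (F p + F q) / 2"
        unfolding F_def by (rule prox_objective_midpoint_less[OF assms(1,4)])
      moreover have "F p \<le> F ((1/2) *\<^sub>R p + (1/2) *\<^sub>R q)" "F q \<le> F ((1/2) *\<^sub>R p + (1/2) *\<^sub>R q)"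
        using p q by blast+
      ultimately show False
        by argo
    qed
  qed
  from theI'[OF this] show ?thesis
    unfolding prox_eq_The_minimiser F_def[symmetric] by blast
qed

lemma le_of_forall_le_add_scaled:
  fixes a b c :: real
  assumes "\<And>t. 0 < t \<Longrightarrow> t \<le> 1 \<Longrightarrow> a \<le> b + t * c"
  shows "a \<le> b"
proof (rule field_le_epsilon)
  fix e :: real assume "0 < e"
  show "a \<le> b + e"
  proof (cases "c \<le> 0")
    case True
    then show ?thesis
      using assms[of 1] \<open>0 < e\<close> by simp
  next
    case False
    have "min 1 (e / c) * c \<le> e / c * c"
      using False by (intro mult_right_mono) auto
    then show ?thesis
      using assms[of "min 1 (e / c)"] \<open>0 < e\<close> False by simp
  qed
qed

text \<open>Moving from the minimiser p a fraction t towards x gains at least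
  (2t - t^2) |x - p|^2 / (2 lam) in the quadratic term and loses at most M t |x - p| in U.\<close>
lemma norm_diff_prox_le:
  fixes U :: "'a::euclidean_space \<Rightarrow> real"
  assumes "convex_on UNIV U" and "\<And>z. 0 \<le> U z" and lip: "M-lipschitz_on UNIV U" and "0 < lam"
  shows "norm (x - prox lam U x) \<le> lam * M"
proof -
  define p where "p = prox lam U x"
  define r where "r = norm (x - p)"
  have "2 * r\<^sup>2 \<le> 2 * lam * M * r + t * r\<^sup>2" if "0 < t" "t \<le> 1" for t
  proof -
    define z where "z = p + t *\<^sub>R (x - p)"
    have "prox_objective lam U x p \<le> prox_objective lam U x z"
      unfolding p_def
      by (rule prox_minimises[OF assms(1) lipschitz_on_continuous_on[OF lip] assms(2,4)])
    moreover have "U z \<le> U p + M * (t * r)"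
      using lipschitz_on_normD[OF lip, of z p] that by (simp add: z_def r_def)
    moreover have "x - z = (1 - t) *\<^sub>R (x - p)"
      by (simp add: z_def algebra_simps)
    then have "(norm (x - z))\<^sup>2 = (1 - t)\<^sup>2 * r\<^sup>2"
      using that by (simp add: r_def power_mult_distrib)
    ultimately have "r\<^sup>2 / (2 * lam) \<le> M * (t * r) + (1 - t)\<^sup>2 * r\<^sup>2 / (2 * lam)"
      unfolding prox_objective_def r_def[symmetric] by simp
    then have "r\<^sup>2 \<le> 2 * lam * M * t * r + (1 - t)\<^sup>2 * r\<^sup>2"
      using \<open>0 < lam\<close> by (simp add: field_simps)
    then have "t * (2 * r\<^sup>2) \<le> t * (2 * lam * M * r + t * r\<^sup>2)"
      by (simp add: power2_eq_square algebra_simps)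
    then show ?thesis
      using \<open>0 < t\<close> by simp
  qed
  then have "2 * r\<^sup>2 \<le> 2 * lam * M * r"
    by (rule le_of_forall_le_add_scaled)
  moreover have "0 \<le> lam * M"
    using lipschitz_on_nonneg[OF lip] \<open>0 < lam\<close> by simp
  ultimately show ?thesis
    by (cases "r = 0") (auto simp: r_def p_def power2_eq_square)
qed

section \<open>The perturbed gradient step\<close>

lemma two_mult_le_weighted_squares:
  fixes a b c :: real
  assumes "0 < c"
  shows "2 * a * b \<le> c * a\<^sup>2 + b\<^sup>2 / c"
  using assms sum_squares_ge_zero[of "c * a - b" 0] by (simp add: field_simps power2_eq_square)

lemma norm_squared_le_twice_diff_plus:
  fixes p q :: "'a::real_normed_vector"
  shows "(norm p)\<^sup>2 \<le> 2 * (norm (p - q))\<^sup>2 + 2 * (norm q)\<^sup>2"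
proof -
  have "(norm p)\<^sup>2 \<le> (norm (p - q) + norm q)\<^sup>2"
    using norm_triangle_ineq[of "p - q" q] by (simp add: power_mono)
  then show ?thesis
    using two_mult_le_weighted_squares[of 1 "norm (p - q)" "norm q"] by (simp add: power2_sum)
qed

lemma norm_gradient_step_le:
  fixes p g xs :: "'a::real_inner"
  assumes mono: "(norm g)\<^sup>2 + m * L * (norm (p - xs))\<^sup>2 \<le> (m + L) * (g \<bullet> (p - xs))"
    and "0 < m" "0 < L" "0 < \<gamma>" "\<gamma> \<le> \<gamma>bar" "\<gamma>bar < 2 / (m + L)" "norm xs \<le> R"
  shows "(norm (p - \<gamma> *\<^sub>R g))\<^sup>2
           \<le> (1 - \<gamma> * (m * L / (m + L))) * (norm p)\<^sup>2
             + \<gamma> * (inverse (2 / (m + L) - \<gamma>bar) + 2 * (m * L / (m + L))) * R\<^sup>2"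
proof -
  define w where "w = m * L / (m + L)"
  define c where "c = 2 / (m + L) - \<gamma>bar"
  define d where "d = p - xs"
  have "0 < w" "0 < c"
    using assms(2,3,6) by (simp_all add: w_def c_def)
  have expand: "(norm (p - \<gamma> *\<^sub>R g))\<^sup>2
      = (norm p)\<^sup>2 - 2 * \<gamma> * (g \<bullet> d) - 2 * \<gamma> * (g \<bullet> xs) + \<gamma>\<^sup>2 * (norm g)\<^sup>2"
    by (simp add: d_def power2_norm_eq_inner inner_diff_left inner_diff_right inner_commute
        power2_eq_square[of \<gamma>] algebra_simps)
  have "(\<gamma>bar + c) / 2 = 1 / (m + L)"
    using assms(2,3) by (simp add: c_def field_simps)
  then have "((norm g)\<^sup>2 + m * L * (norm d)\<^sup>2) / (m + L) = (\<gamma>bar + c) / 2 * (norm g)\<^sup>2 + w * (norm d)\<^sup>2"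
    by (simp add: w_def add_divide_distrib)
  moreover have "((norm g)\<^sup>2 + m * L * (norm d)\<^sup>2) / (m + L) \<le> g \<bullet> d"
    using mono assms(2,3) by (simp add: d_def pos_divide_le_eq mult.commute)
  ultimately have "2 * \<gamma> * ((\<gamma>bar + c) / 2 * (norm g)\<^sup>2 + w * (norm d)\<^sup>2) \<le> 2 * \<gamma> * (g \<bullet> d)"
    using \<open>0 < \<gamma>\<close> by (intro mult_left_mono) auto
  then have tangent: "\<gamma> * (\<gamma>bar + c) * (norm g)\<^sup>2 + 2 * \<gamma> * w * (norm d)\<^sup>2 \<le> 2 * \<gamma> * (g \<bullet> d)"
    by (simp add: field_simps)
  have "- (g \<bullet> xs) \<le> norm g * R"
    using Cauchy_Schwarz_ineq2[of g xs] mult_left_mono[OF \<open>norm xs \<le> R\<close> norm_ge_zero[of g]]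
    by linarith
  then have cauchy_schwarz: "- 2 * \<gamma> * (g \<bullet> xs) \<le> \<gamma> * (2 * norm g * R)"
    using mult_left_mono[of "- (g \<bullet> xs)" "norm g * R" "2 * \<gamma>"] \<open>0 < \<gamma>\<close> by simp
  have step: "\<gamma>\<^sup>2 * (norm g)\<^sup>2 \<le> \<gamma> * \<gamma>bar * (norm g)\<^sup>2"
    using assms(4,5) by (simp add: power2_eq_square mult_right_mono)
  have young: "\<gamma> * (2 * norm g * R) \<le> \<gamma> * (c * (norm g)\<^sup>2 + R\<^sup>2 / c)"
    using two_mult_le_weighted_squares[OF \<open>0 < c\<close>] \<open>0 < \<gamma>\<close> by (intro mult_left_mono) auto
  have "(norm xs)\<^sup>2 \<le> R\<^sup>2"
    using \<open>norm xs \<le> R\<close> by (simp add: power_mono)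
  then have "\<gamma> * w * (norm p)\<^sup>2 \<le> \<gamma> * w * (2 * (norm d)\<^sup>2 + 2 * R\<^sup>2)"
    using norm_squared_le_twice_diff_plus[of p xs] \<open>0 < \<gamma>\<close> \<open>0 < w\<close>
    by (intro mult_left_mono) (auto simp: d_def)
  then have "(norm (p - \<gamma> *\<^sub>R g))\<^sup>2 \<le> (1 - \<gamma> * w) * (norm p)\<^sup>2 + \<gamma> * (1 / c + 2 * w) * R\<^sup>2"
    unfolding expand using tangent cauchy_schwarz step young
    by (simp add: algebra_simps)
  then show ?thesis
    by (simp add: w_def c_def inverse_eq_divide)
qed

lemma m_convex_gradient_step_le:
  fixes f :: "'a::euclidean_space \<Rightarrow> real"
  assumes der: "\<And>x. (f has_derivative (\<lambda>h. g x \<bullet> h)) (at x)"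
    and lip: "\<And>x y. norm (g x - g y) \<le> L * norm (x - y)"
    and mc: "m_convex m f" and min: "\<And>y. f xs \<le> f y" and "norm xs \<le> R"
    and "0 < m" "0 < \<gamma>" "\<gamma> \<le> \<gamma>bar" "\<gamma>bar < 2 / (m + L)"
  shows "(norm (p - \<gamma> *\<^sub>R g p))\<^sup>2
           \<le> (1 - \<gamma> * (m * L / (m + L))) * (norm p)\<^sup>2
             + \<gamma> * (inverse (2 / (m + L) - \<gamma>bar) + 2 * (m * L / (m + L))) * R\<^sup>2"
proof (rule norm_gradient_step_le)
  have "g xs = 0"
    by (rule gradient_eq_0_at_minimum[OF der min])
  then show "(norm (g p))\<^sup>2 + m * L * (norm (p - xs))\<^sup>2 \<le> (m + L) * (g p \<bullet> (p - xs))"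
    using m_convex_lipschitz_gradient_inner_ge[OF der lip mc, of p xs] by simp
  show "0 < L"
    using m_convex_le_lipschitz_gradient[OF der lip mc] \<open>0 < m\<close> by simp
qed (use assms in auto)

lemma perturbed_contraction_le:
  fixes N P X \<gamma> \<gamma>bar w \<kappa> M K :: real
  assumes "N \<le> (1 - \<gamma> * w) * P\<^sup>2 + \<gamma> * K"
    and "0 < \<gamma>" "\<gamma> \<le> \<gamma>bar" "0 < w" "\<gamma> * w \<le> 1"
    and "0 \<le> P" "P \<le> X + \<gamma> * \<kappa> * M" "0 \<le> X" "0 \<le> \<kappa> * M"
  shows "N \<le> (1 - \<gamma> * w / 2) * X\<^sup>2 + \<gamma> * (K + \<gamma>bar * \<kappa>\<^sup>2 * M\<^sup>2 + 2 * \<kappa>\<^sup>2 * M\<^sup>2 * inverse w)"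
proof -
  define \<delta> where "\<delta> = \<gamma> * \<kappa> * M"
  have "0 \<le> \<delta>"
    using assms(2,9) by (simp add: \<delta>_def mult.assoc)
  have "(1 - \<gamma> * w) * P\<^sup>2 \<le> (1 - \<gamma> * w) * (X + \<delta>)\<^sup>2"
    using assms \<open>0 \<le> \<delta>\<close> by (intro mult_left_mono power_mono) (auto simp: \<delta>_def)
  also have "\<dots> \<le> (1 - \<gamma> * w) * X\<^sup>2 + 2 * X * \<delta> + \<delta>\<^sup>2"
    using assms \<open>0 \<le> \<delta>\<close> by (simp add: power2_sum algebra_simps)
  also have "2 * X * \<delta> \<le> \<gamma> * w / 2 * X\<^sup>2 + \<gamma> * (2 * \<kappa>\<^sup>2 * M\<^sup>2 * inverse w)"
    using two_mult_le_weighted_squares[of "\<gamma> * w / 2" X \<delta>] assms(2,4)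
    by (simp add: \<delta>_def power_mult_distrib power2_eq_square[of \<gamma>] field_simps)
  also have "\<delta>\<^sup>2 \<le> \<gamma> * (\<gamma>bar * \<kappa>\<^sup>2 * M\<^sup>2)"
    using assms(2,3) by (simp add: \<delta>_def power_mult_distrib power2_eq_square[of \<gamma>] mult_right_mono)
  finally show ?thesis
    using assms(1) by (simp add: algebra_simps)
qed

lemma step_times_modulus_le_half:
  fixes m L \<gamma> :: real
  assumes "0 < m" "0 < L" "\<gamma> \<le> 2 / (m + L)"
  shows "\<gamma> * (m * L / (m + L)) \<le> 1 / 2"
proof -
  have "\<gamma> * (m * L / (m + L)) \<le> 2 / (m + L) * (m * L / (m + L))"
    using assms by (intro mult_right_mono) auto
  also have "\<dots> = 2 * m * L / (m + L)\<^sup>2"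
    by (simp add: power2_eq_square)
  also have "\<dots> \<le> 1 / 2"
  proof -
    have "4 * m * L \<le> (m + L)\<^sup>2"
      using two_mult_le_weighted_squares[of 1 m L] by (simp add: power2_sum algebra_simps)
    with assms(1,2) show ?thesis
      by (simp add: divide_le_eq)
  qed
  finally show ?thesis .
qed

theorem lemma13:
  fixes \<Theta> :: "'b set"
    and V Vb U Ub :: "'b \<Rightarrow> 'a::euclidean_space \<Rightarrow> real"
    and gradV gradVb :: "'b \<Rightarrow> 'a \<Rightarrow> 'a"
    and L M m RV1 RV2 RU1 RU2 \<kappa> \<gamma> \<gamma>bar :: real and \<theta> :: 'b and x :: 'a
  assumes Theta_ne: "\<Theta> \<noteq> {}"
    (* H1: convexity and nonnegativity *)
    and convex: "\<And>\<theta>. \<theta> \<in> \<Theta> \<Longrightarrow> convex_on UNIV (V \<theta>) \<and> convex_on UNIV (Vb \<theta>)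
                       \<and> convex_on UNIV (U \<theta>) \<and> convex_on UNIV (Ub \<theta>)"
    and nonneg: "\<And>\<theta> x. \<theta> \<in> \<Theta> \<Longrightarrow> 0 \<le> V \<theta> x \<and> 0 \<le> Vb \<theta> x \<and> 0 \<le> U \<theta> x \<and> 0 \<le> Ub \<theta> x"
    (* H1 (a) *)
    and integrable: "\<And>\<theta>. \<theta> \<in> \<Theta> \<Longrightarrow>
          (\<lambda>x. exp (- V \<theta> x - U \<theta> x)) integrable_on UNIV \<and>
          (\<lambda>x. exp (- Vb \<theta> x - Ub \<theta> x)) integrable_on UNIV"
    and int_lower: "min (INF \<theta>\<in>\<Theta>. integral UNIV (\<lambda>x. exp (- V \<theta> x - U \<theta> x)))
                        (INF \<theta>\<in>\<Theta>. integral UNIV (\<lambda>x. exp (- Vb \<theta> x - Ub \<theta> x))) > 0"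
    (* H1 (b) *)
    and gradV: "\<And>\<theta> x. \<theta> \<in> \<Theta> \<Longrightarrow> (V \<theta> has_derivative (\<lambda>h. gradV \<theta> x \<bullet> h)) (at x)"
    and gradVb: "\<And>\<theta> x. \<theta> \<in> \<Theta> \<Longrightarrow> (Vb \<theta> has_derivative (\<lambda>h. gradVb \<theta> x \<bullet> h)) (at x)"
    and gradV_lip: "\<And>\<theta> x y. \<theta> \<in> \<Theta> \<Longrightarrow> norm (gradV \<theta> x - gradV \<theta> y) \<le> L * norm (x - y)"
    and gradVb_lip: "\<And>\<theta> x y. \<theta> \<in> \<Theta> \<Longrightarrow> norm (gradVb \<theta> x - gradVb \<theta> y) \<le> L * norm (x - y)"
    and minV: "\<And>\<theta>. \<theta> \<in> \<Theta> \<Longrightarrow> \<exists>xs. (\<forall>y. V \<theta> xs \<le> V \<theta> y) \<and> norm xs \<le> RV1 \<and> \<bar>V \<theta> xs\<bar> \<le> RV2"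
    and minVb: "\<And>\<theta>. \<theta> \<in> \<Theta> \<Longrightarrow> \<exists>xs. (\<forall>y. Vb \<theta> xs \<le> Vb \<theta> y) \<and> norm xs \<le> RV1 \<and> \<bar>Vb \<theta> xs\<bar> \<le> RV2"
    (* H1 (c) *)
    and U_lip: "\<And>\<theta>. \<theta> \<in> \<Theta> \<Longrightarrow> M-lipschitz_on UNIV (U \<theta>) \<and> M-lipschitz_on UNIV (Ub \<theta>)"
    and U_pt: "\<And>\<theta>. \<theta> \<in> \<Theta> \<Longrightarrow> \<exists>p. norm p \<le> RU1 \<and> \<bar>U \<theta> p\<bar> \<le> RU2"
    and Ub_pt: "\<And>\<theta>. \<theta> \<in> \<Theta> \<Longrightarrow> \<exists>p. norm p \<le> RU1 \<and> \<bar>Ub \<theta> p\<bar> \<le> RU2"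
    (* H2 *)
    and m_pos: "m > 0"
    and strong: "\<And>\<theta>. \<theta> \<in> \<Theta> \<Longrightarrow> m_convex m (V \<theta>) \<and> m_convex m (Vb \<theta>)"
    (* parameters of the lemma *)
    and kappa: "\<kappa> > 0"
    and theta: "\<theta> \<in> \<Theta>"
    and gbar: "\<gamma>bar < 2 / (m + L)"
    and gamma: "0 < \<gamma>" "\<gamma> \<le> \<gamma>bar"
  shows "let w = m * L / (m + L); p = prox (\<gamma> * \<kappa>) (U \<theta>) x in
         (norm (p - \<gamma> *\<^sub>R gradV \<theta> p))\<^sup>2
           \<le> (1 - \<gamma> * w / 2) * (norm x)\<^sup>2
             + \<gamma> * (\<gamma>bar * \<kappa>\<^sup>2 * M\<^sup>2 + (inverse (2 / (m + L) - \<gamma>bar) + 4 * w) * RV1\<^sup>2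
                     + 2 * \<kappa>\<^sup>2 * M\<^sup>2 * inverse w)"
proof -
  define w where "w = m * L / (m + L)"
  define p where "p = prox (\<gamma> * \<kappa>) (U \<theta>) x"
  note der = gradV[OF theta] and lip = gradV_lip[OF theta] and mc = strong[OF theta, THEN conjunct1]
  obtain xs where xs_min: "\<And>y. V \<theta> xs \<le> V \<theta> y" and xs_norm: "norm xs \<le> RV1"
    using minV[OF theta] by blast
  have step: "(norm (p - \<gamma> *\<^sub>R gradV \<theta> p))\<^sup>2
      \<le> (1 - \<gamma> * w) * (norm p)\<^sup>2 + \<gamma> * ((inverse (2 / (m + L) - \<gamma>bar) + 2 * w) * RV1\<^sup>2)"
    using m_convex_gradient_step_le[OF der lip mc xs_min xs_norm m_pos gamma gbar]
    by (simp add: w_def mult.assoc)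
  have "norm (x - p) \<le> \<gamma> * \<kappa> * M"
    unfolding p_def
    by (rule norm_diff_prox_le) (use convex[OF theta] nonneg[OF theta] U_lip[OF theta] gamma kappa in auto)
  then have "norm p \<le> norm x + \<gamma> * \<kappa> * M"
    using norm_triangle_ineq2[of p x] by (simp add: norm_minus_commute)
  moreover have "0 \<le> \<kappa> * M"
    using kappa lipschitz_on_nonneg[of M UNIV "U \<theta>"] U_lip[OF theta] by simp
  moreover have "0 < w" "\<gamma> * w \<le> 1 / 2"
    using m_convex_le_lipschitz_gradient[OF der lip mc] step_times_modulus_le_half m_pos gamma gbar
    by (simp_all add: w_def)
  ultimately have "(norm (p - \<gamma> *\<^sub>R gradV \<theta> p))\<^sup>2 \<le> (1 - \<gamma> * w / 2) * (norm x)\<^sup>2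
      + \<gamma> * ((inverse (2 / (m + L) - \<gamma>bar) + 2 * w) * RV1\<^sup>2 + \<gamma>bar * \<kappa>\<^sup>2 * M\<^sup>2
             + 2 * \<kappa>\<^sup>2 * M\<^sup>2 * inverse w)"
    using perturbed_contraction_le[OF step] gamma by simp
  moreover have "(inverse (2 / (m + L) - \<gamma>bar) + 2 * w) * RV1\<^sup>2
      \<le> (inverse (2 / (m + L) - \<gamma>bar) + 4 * w) * RV1\<^sup>2"
    using \<open>0 < w\<close> by (simp add: mult_right_mono)
  ultimately show ?thesis
    using gamma unfolding Let_def p_def[symmetric] w_def[symmetric]
    by (smt (verit) mult_left_mono)
qed

end
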